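(* Let $n>1$, let $\lambda\in\mathbb C$ with $|\lambda|\notin\{0,1\}$, and let $H=(\mathbb C^n\setminus\{0\})/\Delta_\lambda$ be the Hopf manifold, where $\Delta_\lambda$ is the group generated by $z\mapsto\lambda z$, equipped with the Hermitian metric $ds^2=\frac{1}{\sum_{k=1}^n z^k\bar z^k}\sum_{j=1}^n dz^j\otimes d\bar z^j$. Then every $\pm$holomorphic complex-valued function defined on a connected open subset of $H$ which is $(1,1)$-geodesic is constant.
   Context: A complex-valued function $\phi$ on a Hermitian manifold with local holomorphic coordinates $(z^i)$ is $(1,1)$-geodesic if $\frac{\partial^2\phi}{\partial z^i\partial\bar z^j}-\Gamma^k_{i\bar j}\frac{\partial\phi}{\partial z^k}-\Gamma^{\bar k}_{i\bar j}\frac{\partial\phi}{\partial\bar z^k}=0$ for all $i,j$, where $\Gamma$ are the Christoffel symbols of the Levi-Civita connection of the metric (equivalently $\nabla d\phi(Z,\overline W)=0$ for all $Z,W\in T^{(1,0)}$). A function is $\pm$holomorphic if it is holomorphic or antiholomorphic. ($H$ is a compact non-Kähler Hermitian manifold diffeomorphic to $S^1\times S^{2n-1}$.) *)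

theory Defs
  imports "HOL-Analysis.Analysis"
begin

text \<open>Points of C^n are vectors of type complex^'n (n = CARD('n)); the underlying
real vector space is R^(2n) with real coordinates x_a = Re(z$a), y_a = Im(z$a).\<close>

definition dderiv :: "('a::real_normed_vector \<Rightarrow> 'b::real_normed_vector) \<Rightarrow> 'a \<Rightarrow> 'a \<Rightarrow> 'b" where
  "dderiv f z u = vector_derivative (\<lambda>t::real. f (z + t *\<^sub>R u)) (at 0)"

text \<open>Christoffel symbols of the Levi-Civita connection of a Riemannian metric g
(g p u v = metric at point p applied to tangent vectors u v), given by the Koszul formula
for constant vector fields: g(Gamma(u,v), w) = 1/2 (u g(v,w) + v g(u,w) - w g(u,v)).\<close>
definition lc_christoffel :: "('a::real_normed_vector \<Rightarrow> 'a \<Rightarrow> 'a \<Rightarrow> real) \<Rightarrow> 'a \<Rightarrow> 'a \<Rightarrow> 'a \<Rightarrow> 'a" where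
  "lc_christoffel g z u v =
     (THE c. \<forall>w. g z c w =
        (dderiv (\<lambda>p. g p v w) z u + dderiv (\<lambda>p. g p u w) z v - dderiv (\<lambda>p. g p u v) z w) / 2)"

text \<open>Covariant Hessian (nabla d phi)(u,v) = u(v phi) - (nabla_u v) phi, for constant fields u, v.\<close>
definition lc_hessian :: "('a::real_normed_vector \<Rightarrow> 'a \<Rightarrow> 'a \<Rightarrow> real) \<Rightarrow> ('a \<Rightarrow> complex) \<Rightarrow> 'a \<Rightarrow> 'a \<Rightarrow> 'a \<Rightarrow> complex" where
  "lc_hessian g \<phi> z u v = dderiv (\<lambda>p. dderiv \<phi> p v) z u - dderiv \<phi> z (lc_christoffel g z u v)"

definition hopf_hermitian :: "complex^'n \<Rightarrow> complex^'n \<Rightarrow> complex^'n \<Rightarrow> complex" where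
  "hopf_hermitian z u v = (\<Sum>j\<in>UNIV. u$j * cnj (v$j)) / (\<Sum>k\<in>UNIV. z$k * cnj (z$k))"

definition hopf_riem :: "complex^'n \<Rightarrow> complex^'n \<Rightarrow> complex^'n \<Rightarrow> real" where
  "hopf_riem z u v = Re (hopf_hermitian z u v)"

text \<open>(1,1)-geodesic: (nabla d phi)(d/dz^a, d/d conj z^b) = 0 for all a b, where the
real bilinear Hessian is extended complex-bilinearly and
d/dz^a = (d/dx_a - i d/dy_a)/2, d/d conj z^b = (d/dx_b + i d/dy_b)/2.
The common factor 1/4 is dropped.\<close>
definition geodesic11 :: "(complex^'n \<Rightarrow> complex^'n \<Rightarrow> complex^'n \<Rightarrow> real) \<Rightarrow> (complex^'n) set \<Rightarrow> (complex^'n \<Rightarrow> complex) \<Rightarrow> bool" where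
  "geodesic11 g W \<phi> \<longleftrightarrow> (\<forall>z\<in>W. \<forall>a b.
     (let X = (\<lambda>i. axis i (1::complex)); Y = (\<lambda>i. axis i \<i>) in
       lc_hessian g \<phi> z (X a) (X b) + \<i> * lc_hessian g \<phi> z (X a) (Y b)
       - \<i> * lc_hessian g \<phi> z (Y a) (X b) + lc_hessian g \<phi> z (Y a) (Y b) = 0))"

definition holomorphic_nv :: "(complex^'n \<Rightarrow> complex) \<Rightarrow> (complex^'n) set \<Rightarrow> bool" where
  "holomorphic_nv f W \<longleftrightarrow> (\<forall>z\<in>W. \<exists>f'. (f has_derivative f') (at z) \<and> (\<forall>v. f' (\<i> *s v) = \<i> * f' v))"

definition antiholomorphic_nv :: "(complex^'n \<Rightarrow> complex) \<Rightarrow> (complex^'n) set \<Rightarrow> bool" where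
  "antiholomorphic_nv f W \<longleftrightarrow> holomorphic_nv (\<lambda>z. cnj (f z)) W"

text \<open>Open subsets of the Hopf manifold H = (C^n - {0})/Delta_lambda correspond to open subsets
W of C^n - {0} invariant under z \<mapsto> lambda z (and its inverse); functions on them correspond
to Delta_lambda-invariant functions on W.  The subset of H is connected iff W admits no
splitting into two disjoint nonempty invariant open sets.\<close>
definition hopf_invariant :: "complex \<Rightarrow> (complex^'n) set \<Rightarrow> bool" where
  "hopf_invariant lam W \<longleftrightarrow> (\<forall>z. z \<in> W \<longleftrightarrow> lam *s z \<in> W)"

definition hopf_open :: "complex \<Rightarrow> (complex^'n) set \<Rightarrow> bool" where
  "hopf_open lam W \<longleftrightarrow> open W \<and> W \<subseteq> - {0} \<and> hopf_invariant lam W"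

definition hopf_connected :: "complex \<Rightarrow> (complex^'n) set \<Rightarrow> bool" where
  "hopf_connected lam W \<longleftrightarrow> \<not> (\<exists>A B. hopf_open lam A \<and> hopf_open lam B \<and> A \<inter> B = {} \<and>
        A \<union> B = W \<and> A \<noteq> {} \<and> B \<noteq> {})"

end

theory Submission
  imports Defs "HOL-Complex_Analysis.Cauchy_Integral_Formula"
begin

(* Write psi for f or its conjugate, so that psi is holomorphic with complex-linear derivative D.
   On a complex coordinate line psi is a holomorphic function of one variable, so in the
   (1,1)-combination of the covariant Hessian in the directions e and i e its second derivatives
   cancel and only the Christoffel term remains.  For the Hopf metric
   Gamma(e,e) + Gamma(i e, i e) = (2 / |z|^2) (z - z_a e), with e the a-th unit vector, so
   (1,1)-geodesy says D z z = z_a D e for every a.  Summing over a gives D z z = n D z z, hence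
   D z z = 0 as n > 1 and z_a D e = 0.  By continuity of the derivative of psi along the a-th
   coordinate line the factor z_a can be dropped, so D = 0 and f is locally constant.  Its level
   sets are open and invariant under z \<mapsto> lam z, and connectedness of the quotient makes f
   constant. *)

section \<open>Complex-linear maps and directional derivatives\<close>

lemma scaleR_eq_of_real_scalar_mult: "t *\<^sub>R (v::complex^'n) = of_real t *s v"
  unfolding vec_eq_iff by (simp add: scaleR_conv_of_real[where 'a=complex])

lemma scalar_mult_Re_Im: "c *s (v::complex^'n) = Re c *\<^sub>R v + Im c *\<^sub>R (\<i> *s v)"
  unfolding vec_eq_iff scaleR_eq_of_real_scalar_mult by (simp add: complex_eq_iff algebra_simps)

lemma complex_linear_scalar_mult:
  fixes L :: "complex^'n \<Rightarrow> complex"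
  assumes "linear L" "\<And>v. L (\<i> *s v) = \<i> * L v"
  shows "L (c *s v) = c * L v"
proof -
  have "L (c *s v) = Re c *\<^sub>R L v + Im c *\<^sub>R (\<i> * L v)"
    using assms by (subst scalar_mult_Re_Im) (simp only: linear_add linear_scale)
  also have "\<dots> = c * L v"
    by (simp add: scaleR_conv_of_real complex_eq_iff algebra_simps)
  finally show ?thesis .
qed

lemma complex_linear_axis_expansion:
  fixes L :: "complex^'n \<Rightarrow> complex"
  assumes "linear L" "\<And>v. L (\<i> *s v) = \<i> * L v"
  shows "L v = (\<Sum>a\<in>UNIV. v $ a * L (axis a 1))"
proof -
  have "L v = L (\<Sum>a\<in>UNIV. v $ a *s axis a 1)" by (simp add: basis_expansion)
  also have "\<dots> = (\<Sum>a\<in>UNIV. L (v $ a *s axis a 1))"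
    using assms(1) by (simp add: linear_sum o_def)
  also have "\<dots> = (\<Sum>a\<in>UNIV. v $ a * L (axis a 1))"
    using complex_linear_scalar_mult[OF assms] by simp
  finally show ?thesis .
qed

lemma complex_line_has_derivative:
  "((\<lambda>s. z + s *s (e::complex^'n)) has_derivative (\<lambda>h. h *s e)) (at s)"
proof -
  have "linear (\<lambda>h::complex. h *s e)"
    by (rule linearI) (simp_all add: vec_eq_iff scaleR_conv_of_real[where 'a=complex] algebra_simps)
  then have "bounded_linear (\<lambda>h::complex. h *s e)"
    by (simp add: linear_conv_bounded_linear)
  then show ?thesis
    using bounded_linear.has_derivative[of "\<lambda>h. h *s e" "\<lambda>s. s" "\<lambda>h. h"]
    by (auto intro!: derivative_eq_intros)
qed

lemma open_vimage_complex_line: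
  "open W \<Longrightarrow> open ((\<lambda>s::complex. z + s *s (e::complex^'n)) -` W)"
  by (rule continuous_open_vimage)
     (auto intro: has_derivative_continuous[OF complex_line_has_derivative])

lemma open_vimage_real_line:
  "open W \<Longrightarrow> open ((\<lambda>t::real. z + t *\<^sub>R (u::'a::real_normed_vector)) -` W)"
  by (rule continuous_open_vimage) (auto intro: continuous_intros)

lemma dderiv_eqI:
  "((\<lambda>t. f (z + t *\<^sub>R u)) has_vector_derivative f') (at 0) \<Longrightarrow> dderiv f z u = f'"
  unfolding dderiv_def by (rule vector_derivative_at)

lemma dderiv_eq_derivative:
  assumes "(f has_derivative f') (at p)"
  shows "dderiv f p v = f' v"
proof (rule dderiv_eqI)
  have "((\<lambda>t::real. p + t *\<^sub>R v) has_derivative (\<lambda>t. t *\<^sub>R v)) (at 0)"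
    by (auto intro!: derivative_eq_intros)
  from has_derivative_compose[OF this]
  have "((\<lambda>t. f (p + t *\<^sub>R v)) has_derivative (\<lambda>t. f' (t *\<^sub>R v))) (at 0)"
    using assms by simp
  moreover have "f' (t *\<^sub>R v) = t *\<^sub>R f' v" for t
    using has_derivative_bounded_linear[OF assms] by (simp add: linear_simps)
  ultimately show "((\<lambda>t. f (p + t *\<^sub>R v)) has_vector_derivative f' v) (at 0)"
    by (simp add: has_vector_derivative_def)
qed

lemma dderiv_cong_open:
  assumes "open A" "z \<in> A" "\<And>p. p \<in> A \<Longrightarrow> f p = g p"
  shows "dderiv f z u = dderiv g z u"
proof -
  have "eventually (\<lambda>t. t \<in> (\<lambda>t::real. z + t *\<^sub>R u) -` A) (nhds 0)"
    using assms(2) by (intro eventually_nhds_in_open open_vimage_real_line assms(1)) simp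
  then show ?thesis
    unfolding dderiv_def
    by (intro vector_derivative_cong_eq) (auto elim: eventually_mono simp: assms(3))
qed

lemma dderiv_cnj:
  assumes "(\<lambda>t. f (z + t *\<^sub>R u)) differentiable (at 0)"
  shows "dderiv (\<lambda>p. cnj (f p)) z u = cnj (dderiv f z u)"
  using assms unfolding vector_derivative_works dderiv_def
  by (intro vector_derivative_at has_vector_derivative_cnj)

lemma lc_hessian_cnj:
  assumes "open A" "z \<in> A" "\<And>p. p \<in> A \<Longrightarrow> (\<phi> has_derivative \<phi>' p) (at p)"
    and "(\<lambda>t. dderiv \<phi> (z + t *\<^sub>R u) v) differentiable (at 0)"
  shows "lc_hessian g (\<lambda>p. cnj (\<phi> p)) z u v = cnj (lc_hessian g \<phi> z u v)"
proof -
  have first: "dderiv (\<lambda>p. cnj (\<phi> p)) p w = cnj (dderiv \<phi> p w)" if "p \<in> A" for p w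
    using dderiv_eq_derivative[OF has_derivative_cnj[OF assms(3)[OF that]]]
      dderiv_eq_derivative[OF assms(3)[OF that]] by simp
  then have "dderiv (\<lambda>p. dderiv (\<lambda>p. cnj (\<phi> p)) p v) z u = dderiv (\<lambda>p. cnj (dderiv \<phi> p v)) z u"
    by (intro dderiv_cong_open[OF assms(1,2)]) simp
  also have "\<dots> = cnj (dderiv (\<lambda>p. dderiv \<phi> p v) z u)"
    using assms(4) by (rule dderiv_cnj)
  finally show ?thesis
    unfolding lc_hessian_def using first[OF assms(2)] by simp
qed

lemma lc_christoffel_commute:
  assumes "\<And>p u v. g p u v = g p v u"
  shows "lc_christoffel g z u v = lc_christoffel g z v u"
  unfolding lc_christoffel_def by (simp add: assms add.commute)

lemma geodesic11_diagonal:
  assumes "geodesic11 g W \<phi>" "z \<in> W"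
    and "lc_hessian g \<phi> z (axis a 1) (axis a \<i>) = lc_hessian g \<phi> z (axis a \<i>) (axis a 1)"
  shows "lc_hessian g \<phi> z (axis a 1) (axis a 1) + lc_hessian g \<phi> z (axis a \<i>) (axis a \<i>) = 0"
proof -
  have "lc_hessian g \<phi> z (axis a 1) (axis a 1) + \<i> * lc_hessian g \<phi> z (axis a 1) (axis a \<i>)
      - \<i> * lc_hessian g \<phi> z (axis a \<i>) (axis a 1) + lc_hessian g \<phi> z (axis a \<i>) (axis a \<i>) = 0"
    using assms(1,2) unfolding geodesic11_def Let_def by blast
  then show ?thesis
    unfolding assms(3) by simp
qed

section \<open>Holomorphic functions of several variables along complex lines\<close>

locale holomorphic_nv_derivative =
  fixes W :: "(complex^'n) set" and \<psi> :: "complex^'n \<Rightarrow> complex"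
    and D :: "complex^'n \<Rightarrow> complex^'n \<Rightarrow> complex"
  assumes open_domain: "open W"
    and has_derivative: "p \<in> W \<Longrightarrow> (\<psi> has_derivative D p) (at p)"
    and complex_linear: "p \<in> W \<Longrightarrow> D p (\<i> *s v) = \<i> * D p v"
begin

lemma linear_derivative: "p \<in> W \<Longrightarrow> linear (D p)"
  using has_derivative has_derivative_linear by blast

lemma derivative_scalar_mult: "p \<in> W \<Longrightarrow> D p (c *s v) = c * D p v"
  using complex_linear_scalar_mult linear_derivative complex_linear by blast

lemma derivative_axis_expansion: "p \<in> W \<Longrightarrow> D p v = (\<Sum>a\<in>UNIV. v $ a * D p (axis a 1))"
  using complex_linear_axis_expansion linear_derivative complex_linear by blast

lemma complex_line_has_field_derivative:
  assumes "z + s *s e \<in> W"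
  shows "((\<lambda>s. \<psi> (z + s *s e)) has_field_derivative D (z + s *s e) e) (at s)"
proof -
  have "((\<lambda>s. \<psi> (z + s *s e)) has_derivative (\<lambda>h. D (z + s *s e) (h *s e))) (at s)"
    using has_derivative_compose[OF complex_line_has_derivative has_derivative[OF assms]] .
  moreover have "(\<lambda>h. D (z + s *s e) (h *s e)) = (*) (D (z + s *s e) e)"
    by (rule ext) (simp add: derivative_scalar_mult[OF assms] mult.commute)
  ultimately show ?thesis
    by (simp add: has_field_derivative_def)
qed

lemma deriv_complex_line:
  "z + s *s e \<in> W \<Longrightarrow> deriv (\<lambda>s. \<psi> (z + s *s e)) s = D (z + s *s e) e"
  by (rule DERIV_imp_deriv[OF complex_line_has_field_derivative])

lemma deriv_complex_line_holomorphic: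
  "deriv (\<lambda>s. \<psi> (z + s *s e)) holomorphic_on (\<lambda>s. z + s *s e) -` W"
proof (rule holomorphic_deriv[OF _ open_vimage_complex_line[OF open_domain]])
  show "(\<lambda>s. \<psi> (z + s *s e)) holomorphic_on (\<lambda>s. z + s *s e) -` W"
    unfolding holomorphic_on_def field_differentiable_def
    using complex_line_has_field_derivative has_field_derivative_at_within by blast
qed

lemma dderiv_complex_line_has_vector_derivative:
  assumes "z \<in> W"
  shows "((\<lambda>t. dderiv \<psi> (z + t *\<^sub>R (c *s e)) (c' *s e)) has_vector_derivative
           c' * c * deriv (deriv (\<lambda>s. \<psi> (z + s *s e))) 0) (at 0)"
proof -
  define G where "G = (\<lambda>s. \<psi> (z + s *s e))"
  define K where "K = deriv (deriv G) 0"
  have "(deriv G has_field_derivative K) (at 0)"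
    using holomorphic_derivI[OF deriv_complex_line_holomorphic open_vimage_complex_line[OF open_domain]]
      assms unfolding G_def K_def by simp
  moreover have "((\<lambda>t. of_real t * c) has_vector_derivative c) (at 0)"
    by (auto intro!: derivative_eq_intros)
  ultimately have "((deriv G \<circ> (\<lambda>t. of_real t * c)) has_vector_derivative c * K) (at 0)"
    using field_vector_diff_chain_at[of "\<lambda>t. of_real t * c" c 0 "deriv G" K] by simp
  then have chain: "((\<lambda>t. c' * deriv G (of_real t * c)) has_vector_derivative c' * c * K) (at 0)"
    unfolding o_def mult.assoc by (rule has_vector_derivative_mult_right)
  have on_line: "c' * deriv G (of_real t * c) = dderiv \<psi> (z + t *\<^sub>R (c *s e)) (c' *s e)"
    if "t \<in> (\<lambda>t. z + t *\<^sub>R (c *s e)) -` W" for t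
  proof -
    have p: "z + (of_real t * c) *s e \<in> W"
      using that by (simp add: scaleR_eq_of_real_scalar_mult)
    show ?thesis
      using that by (simp add: G_def deriv_complex_line[OF p] dderiv_eq_derivative[OF has_derivative]
          derivative_scalar_mult[OF p] scaleR_eq_of_real_scalar_mult)
  qed
  show ?thesis
    using has_vector_derivative_transform_within_open[OF chain open_vimage_real_line[OF open_domain] _ on_line]
      assms unfolding G_def K_def by simp
qed

lemma lc_hessian_complex_line:
  assumes "z \<in> W"
  obtains K where
    "\<And>c c'. lc_hessian g \<psi> z (c *s e) (c' *s e) =
       c' * c * K - D z (lc_christoffel g z (c *s e) (c' *s e))"
    "\<And>c c'. lc_hessian g (\<lambda>p. cnj (\<psi> p)) z (c *s e) (c' *s e) =
       cnj (c' * c * K - D z (lc_christoffel g z (c *s e) (c' *s e)))"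
proof
  let ?K = "deriv (deriv (\<lambda>s. \<psi> (z + s *s e))) 0"
  note second = dderiv_complex_line_has_vector_derivative[OF assms]
  show hessian: "lc_hessian g \<psi> z (c *s e) (c' *s e) =
       c' * c * ?K - D z (lc_christoffel g z (c *s e) (c' *s e))" for c c'
    unfolding lc_hessian_def dderiv_eqI[OF second] dderiv_eq_derivative[OF has_derivative[OF assms]] ..
  show "lc_hessian g (\<lambda>p. cnj (\<psi> p)) z (c *s e) (c' *s e) =
       cnj (c' * c * ?K - D z (lc_christoffel g z (c *s e) (c' *s e)))" for c c'
    unfolding hessian[symmetric]
    by (rule lc_hessian_cnj[OF open_domain assms has_derivative differentiableI_vector[OF second]])
qed

lemma geodesic11_christoffel_trace:
  assumes sym: "\<And>p u v. g p u v = g p v u" and "z \<in> W"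
    and "geodesic11 g W \<psi> \<or> geodesic11 g W (\<lambda>p. cnj (\<psi> p))"
  shows "D z (lc_christoffel g z (axis a 1) (axis a 1) + lc_christoffel g z (axis a \<i>) (axis a \<i>)) = 0"
proof -
  define e where "e = axis a (1::complex)"
  have X: "axis a 1 = 1 *s e" and Y: "axis a \<i> = \<i> *s e"
    by (simp_all add: e_def vec_eq_iff axis_def)
  obtain K where H: "\<And>c c'. lc_hessian g \<psi> z (c *s e) (c' *s e) =
       c' * c * K - D z (lc_christoffel g z (c *s e) (c' *s e))"
    and Hcnj: "\<And>c c'. lc_hessian g (\<lambda>p. cnj (\<psi> p)) z (c *s e) (c' *s e) =
       cnj (c' * c * K - D z (lc_christoffel g z (c *s e) (c' *s e)))"
    using lc_hessian_complex_line[OF \<open>z \<in> W\<close>] by metis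
  have Gamma_sym: "lc_christoffel g z (\<i> *s e) (1 *s e) = lc_christoffel g z (1 *s e) (\<i> *s e)"
    by (rule lc_christoffel_commute[OF sym])
  let ?A = "D z (lc_christoffel g z (1 *s e) (1 *s e))"
  let ?B = "D z (lc_christoffel g z (\<i> *s e) (\<i> *s e))"
  have "(1 * 1 * K - ?A) + (\<i> * \<i> * K - ?B) = 0"
    using assms(3)
  proof
    assume "geodesic11 g W \<psi>"
    from geodesic11_diagonal[OF this \<open>z \<in> W\<close>, of a] show ?thesis
      unfolding X Y H Gamma_sym by (simp add: mult.commute)
  next
    assume "geodesic11 g W (\<lambda>p. cnj (\<psi> p))"
    from geodesic11_diagonal[OF this \<open>z \<in> W\<close>, of a]
    have "cnj (1 * 1 * K - ?A) + cnj (\<i> * \<i> * K - ?B) = 0"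
      unfolding X Y Hcnj Gamma_sym by (simp add: mult.commute)
    then show ?thesis
      by (metis complex_cnj_add complex_cnj_zero_iff)
  qed
  then have "?A + ?B = 0"
    by (simp add: algebra_simps neg_eq_iff_add_eq_0)
  then show ?thesis
    using linear_derivative[OF \<open>z \<in> W\<close>] unfolding X Y by (simp add: linear_add)
qed

lemma derivative_axis_eq_0:
  assumes vanish: "\<And>p. p \<in> W \<Longrightarrow> p $ a * D p (axis a 1) = 0" and "z \<in> W"
  shows "D z (axis a 1) = 0"
proof -
  define G where "G = (\<lambda>s. \<psi> (z + s *s axis a 1))"
  let ?U = "(\<lambda>s. z + s *s axis a 1) -` W"
  have U: "open ?U" "0 \<in> ?U"
    using open_vimage_complex_line[OF open_domain] \<open>z \<in> W\<close> by auto
  have "continuous_on ?U (deriv G)"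
    unfolding G_def by (rule holomorphic_on_imp_continuous_on[OF deriv_complex_line_holomorphic])
  then have "(deriv G \<longlongrightarrow> deriv G 0) (at 0)"
    using U continuous_on_eq_continuous_at isContD by blast
  moreover have "eventually (\<lambda>s. deriv G s = 0) (at 0)"
    using eventually_at_in_open'[OF U] eventually_neq_at_within[of "- z $ a" 0 UNIV]
  proof eventually_elim
    case (elim s)
    then have "(z + s *s axis a 1) $ a \<noteq> 0"
      by (auto simp: axis_def add_eq_0_iff)
    moreover have "z + s *s axis a 1 \<in> W"
      using elim by simp
    ultimately show "deriv G s = 0"
      using vanish[of "z + s *s axis a 1"] unfolding G_def by (simp add: deriv_complex_line)
  qed
  then have "(deriv G \<longlongrightarrow> 0) (at 0)" by (rule tendsto_eventually)
  ultimately have "deriv G 0 = 0" by (rule tendsto_unique[OF at_neq_bot])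
  then show ?thesis
    using U unfolding G_def by (simp add: deriv_complex_line)
qed

lemma locally_constant_if_derivative_eq_0:
  assumes "\<And>p. p \<in> W \<Longrightarrow> D p = (\<lambda>v. 0)" and "p \<in> W"
  shows "eventually (\<lambda>q. \<psi> q = \<psi> p) (nhds p)"
proof -
  obtain r where r: "r > 0" "ball p r \<subseteq> W"
    using open_domain \<open>p \<in> W\<close> openE by blast
  have const: "\<psi> q = \<psi> p" if "q \<in> ball p r" for q
  proof (rule has_derivative_zero_unique[OF convex_ball _ that])
    show "(\<psi> has_derivative (\<lambda>h. 0)) (at x within ball p r)" if "x \<in> ball p r" for x
    proof -
      have "x \<in> W" using that r(2) by blast
      then show ?thesis
        using has_derivative[of x] assms(1)[of x] by (simp add: has_derivative_at_withinI)
    qed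
  qed (use r in simp)
  show ?thesis
    using eventually_nhds_ball[OF r(1), of p] by (rule eventually_mono) (rule const)
qed

end

lemma holomorphic_nv_derivative_exists:
  assumes "open W" "holomorphic_nv \<psi> W"
  obtains D where "holomorphic_nv_derivative W \<psi> D"
proof -
  obtain D where "\<forall>p\<in>W. (\<psi> has_derivative D p) (at p) \<and> (\<forall>v. D p (\<i> *s v) = \<i> * D p v)"
    using assms(2) unfolding holomorphic_nv_def by metis
  then have "holomorphic_nv_derivative W \<psi> D"
    using assms(1) by unfold_locales auto
  then show ?thesis by (rule that)
qed

section \<open>The Levi-Civita connection of the Hopf metric\<close>

lemma hopf_riem_eq_inner: "hopf_riem p v w = inner v w / inner p p"
proof -
  have "(\<Sum>k\<in>UNIV. p $ k * cnj (p $ k)) = complex_of_real (inner p p)"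
    by (simp add: inner_vec_def inner_complex_def complex_mult_cnj power2_eq_square)
  moreover have "Re (\<Sum>j\<in>UNIV. v $ j * cnj (w $ j)) = inner v w"
    by (simp add: inner_vec_def inner_complex_def Re_sum)
  ultimately show ?thesis
    unfolding hopf_riem_def hopf_hermitian_def by (simp add: Re_divide_of_real)
qed

lemma hopf_riem_commute: "hopf_riem p v w = hopf_riem p w v"
  by (simp add: hopf_riem_eq_inner inner_commute)

lemma dderiv_hopf_riem:
  assumes "z \<noteq> 0"
  shows "dderiv (\<lambda>p. hopf_riem p v w) z u = - inner v w * (2 * inner z u) / (inner z z)^2"
proof (rule dderiv_eqI)
  have "inner (z + t *\<^sub>R u) (z + t *\<^sub>R u) = inner z z + 2 * t * inner z u + t^2 * inner u u" for t
    by (simp add: inner_add inner_commute power2_eq_square algebra_simps)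
  moreover have "((\<lambda>t. inner v w / (inner z z + 2 * t * inner z u + t^2 * inner u u))
      has_real_derivative - inner v w * (2 * inner z u) / (inner z z)^2) (at 0)"
    using assms by (auto intro!: derivative_eq_intros simp: power2_eq_square)
  ultimately show "((\<lambda>t. hopf_riem (z + t *\<^sub>R u) v w) has_vector_derivative
      - inner v w * (2 * inner z u) / (inner z z)^2) (at 0)"
    by (simp add: hopf_riem_eq_inner has_real_derivative_iff_has_vector_derivative)
qed

lemma lc_christoffel_hopf_riem:
  fixes z :: "complex^'n"
  assumes "z \<noteq> 0"
  shows "lc_christoffel hopf_riem z u v =
     (1 / inner z z) *\<^sub>R (inner u v *\<^sub>R z - inner z u *\<^sub>R v - inner z v *\<^sub>R u)"
    (is "_ = ?\<Gamma>")
  unfolding lc_christoffel_def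
proof (rule the_equality)
  have N: "inner z z \<noteq> 0" using assms by simp
  show koszul: "\<forall>w. hopf_riem z ?\<Gamma> w = (dderiv (\<lambda>p. hopf_riem p v w) z u
      + dderiv (\<lambda>p. hopf_riem p u w) z v - dderiv (\<lambda>p. hopf_riem p u v) z w) / 2"
    unfolding dderiv_hopf_riem[OF assms] using N
    by (simp add: hopf_riem_eq_inner inner_diff_left inner_diff_right inner_add_left inner_add_right
        inner_commute field_simps power2_eq_square)
  fix c
  assume c: "\<forall>w. hopf_riem z c w = (dderiv (\<lambda>p. hopf_riem p v w) z u
      + dderiv (\<lambda>p. hopf_riem p u w) z v - dderiv (\<lambda>p. hopf_riem p u v) z w) / 2"
  have "hopf_riem z c (c - ?\<Gamma>) = hopf_riem z ?\<Gamma> (c - ?\<Gamma>)"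
    using c koszul by metis
  then have "inner c (c - ?\<Gamma>) = inner ?\<Gamma> (c - ?\<Gamma>)"
    using N unfolding hopf_riem_eq_inner divide_cancel_right by blast
  then have "inner (c - ?\<Gamma>) (c - ?\<Gamma>) = 0"
    by (simp only: inner_diff_left diff_self)
  then show "c = ?\<Gamma>" by simp
qed

lemma lc_christoffel_hopf_riem_trace:
  fixes z :: "complex^'n"
  assumes "z \<noteq> 0"
  shows "lc_christoffel hopf_riem z (axis a 1) (axis a 1) + lc_christoffel hopf_riem z (axis a \<i>) (axis a \<i>)
    = (2 / inner z z) *\<^sub>R (z - z $ a *s axis a 1)"
proof -
  have "inner (axis a 1) (axis a (1::complex)) = 1" "inner (axis a \<i>) (axis a \<i>) = 1"
    "inner z (axis a 1) = Re (z $ a)" "inner z (axis a \<i>) = Im (z $ a)"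
    by (simp_all add: inner_axis inner_axis_axis inner_complex_def)
  then show ?thesis
    unfolding lc_christoffel_hopf_riem[OF assms]
    by (simp add: vec_eq_iff axis_def complex_eq_iff field_simps)
qed

lemma (in holomorphic_nv_derivative) hopf_geodesic11_radial:
  assumes "0 \<notin> W" "z \<in> W" "geodesic11 hopf_riem W \<psi> \<or> geodesic11 hopf_riem W (\<lambda>p. cnj (\<psi> p))"
  shows "D z z = z $ a * D z (axis a 1)"
proof -
  have z: "z \<noteq> 0" using assms by auto
  have "0 = D z ((2 / inner z z) *\<^sub>R (z - z $ a *s axis a 1))"
    using geodesic11_christoffel_trace[OF hopf_riem_commute assms(2,3)]
    by (simp add: lc_christoffel_hopf_riem_trace[OF z])
  also have "\<dots> = (2 / inner z z) *\<^sub>R (D z z - z $ a * D z (axis a 1))"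
    using linear_derivative[OF assms(2)] derivative_scalar_mult[OF assms(2)]
    by (simp add: linear_scale linear_diff)
  finally show ?thesis using z by simp
qed

lemma (in holomorphic_nv_derivative) hopf_geodesic11_derivative_eq_0:
  assumes "CARD('n) > 1" "0 \<notin> W" "geodesic11 hopf_riem W \<psi> \<or> geodesic11 hopf_riem W (\<lambda>p. cnj (\<psi> p))"
    and "z \<in> W"
  shows "D z = (\<lambda>v. 0)"
proof -
  have vanish: "p $ a * D p (axis a 1) = 0" if p: "p \<in> W" for p a
  proof -
    note radial = hopf_geodesic11_radial[OF assms(2) p assms(3)]
    have "D p p = (\<Sum>b\<in>UNIV. p $ b * D p (axis b 1))"
      by (rule derivative_axis_expansion[OF p])
    also have "\<dots> = of_nat CARD('n) * D p p"
      by (simp flip: radial)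
    finally have "(of_nat CARD('n) - 1) * D p p = 0"
      by (simp add: algebra_simps)
    moreover have "(of_nat CARD('n) :: complex) \<noteq> 1"
      using assms(1) by (metis less_irrefl of_nat_1 of_nat_eq_iff)
    ultimately show ?thesis
      using radial[of a] by simp
  qed
  show ?thesis
    using derivative_axis_expansion[OF assms(4)] derivative_axis_eq_0[OF vanish assms(4)] by auto
qed

section \<open>Connectedness of subsets of the Hopf manifold\<close>

lemma open_Collect_locally_constant:
  assumes "open W" and loc: "\<And>p. p \<in> W \<Longrightarrow> eventually (\<lambda>q. f q = f p) (nhds p)"
  shows "open {z\<in>W. P (f z)}"
proof (subst open_subopen, intro ballI)
  fix p
  assume p: "p \<in> {z\<in>W. P (f z)}"
  then have "eventually (\<lambda>q. q \<in> W \<and> f q = f p) (nhds p)"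
    by (intro eventually_conj eventually_nhds_in_open assms(1) loc) auto
  then have "eventually (\<lambda>q. q \<in> {z\<in>W. P (f z)}) (nhds p)"
    using p by (auto elim!: eventually_mono)
  then show "\<exists>T. open T \<and> p \<in> T \<and> T \<subseteq> {z\<in>W. P (f z)}"
    unfolding eventually_nhds by blast
qed

lemma hopf_connected_locally_constant:
  assumes "hopf_open lam W" "hopf_connected lam W" "\<forall>z\<in>W. f (lam *s z) = f z"
    and "\<And>p. p \<in> W \<Longrightarrow> eventually (\<lambda>q. f q = f p) (nhds p)"
  shows "\<exists>c. \<forall>z\<in>W. f z = c"
proof (cases "W = {}")
  case False
  then obtain z0 where "z0 \<in> W" by blast
  have W: "open W" "W \<subseteq> - {0}" "\<And>z. lam *s z \<in> W \<longleftrightarrow> z \<in> W"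
    using assms(1) unfolding hopf_open_def hopf_invariant_def by blast+
  have hopf_open_level: "hopf_open lam {z\<in>W. P (f z)}" for P
  proof -
    have "z \<in> {z\<in>W. P (f z)} \<longleftrightarrow> lam *s z \<in> {z\<in>W. P (f z)}" for z
      using W(3)[of z] assms(3) by auto
    then show ?thesis
      using W(2) open_Collect_locally_constant[OF W(1) assms(4)]
      unfolding hopf_open_def hopf_invariant_def by blast
  qed
  have "hopf_open lam {z\<in>W. f z = f z0}" "hopf_open lam {z\<in>W. f z \<noteq> f z0}"
    by (fact hopf_open_level)+
  then have "{z\<in>W. f z \<noteq> f z0} = {}"
    using assms(2) \<open>z0 \<in> W\<close> unfolding hopf_connected_def by blast
  then show ?thesis by blast
qed simp

lemma holomorphic_or_antiholomorphic_nv_cases: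
  assumes "holomorphic_nv f W \<or> antiholomorphic_nv f W"
  obtains \<psi> where "holomorphic_nv \<psi> W" "f = \<psi> \<or> f = (\<lambda>p. cnj (\<psi> p))"
proof (cases "holomorphic_nv f W")
  case True
  then show ?thesis
    using that by blast
next
  case False
  then have "holomorphic_nv (\<lambda>p. cnj (f p)) W"
    using assms unfolding antiholomorphic_nv_def by blast
  then show ?thesis
    using that[of "\<lambda>p. cnj (f p)"] by simp
qed

theorem mainTheorem3:
  fixes lam :: complex and W :: "(complex^'n) set" and f :: "complex^'n \<Rightarrow> complex"
  assumes "CARD('n) > 1"
    and "norm lam \<noteq> 0" and "norm lam \<noteq> 1"
    and "hopf_open lam W" and "hopf_connected lam W"
    and "\<forall>z\<in>W. f (lam *s z) = f z"
    and "holomorphic_nv f W \<or> antiholomorphic_nv f W"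
    and "geodesic11 hopf_riem W f"
  shows "\<exists>c. \<forall>z\<in>W. f z = c"
proof -
  have W: "open W" "0 \<notin> W"
    using assms(4) unfolding hopf_open_def by auto
  obtain \<psi> where hol: "holomorphic_nv \<psi> W" and f: "f = \<psi> \<or> f = (\<lambda>p. cnj (\<psi> p))"
    using holomorphic_or_antiholomorphic_nv_cases[OF assms(7)] .
  obtain D where "holomorphic_nv_derivative W \<psi> D"
    using holomorphic_nv_derivative_exists[OF W(1) hol] .
  then interpret holomorphic_nv_derivative W \<psi> D .
  have "geodesic11 hopf_riem W \<psi> \<or> geodesic11 hopf_riem W (\<lambda>p. cnj (\<psi> p))"
    using f assms(8) by auto
  note derivative_zero = hopf_geodesic11_derivative_eq_0[OF assms(1) W(2) this]
  have "eventually (\<lambda>q. f q = f p) (nhds p)" if "p \<in> W" for p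
    using locally_constant_if_derivative_eq_0[OF derivative_zero that] f by (auto elim: eventually_mono)
  then show ?thesis
    by (rule hopf_connected_locally_constant[OF assms(4,5,6)])
qed

end
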